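(* For every instance, a probability distribution $q$ on the tests is a memoryless schedule attaining $\mathrm{opt}_M\text{-}\mathrm{MAX}$ (the infimum over memoryless schedules of the common value $\mathrm{WMP}[q]=\mathrm{MWP}[q]=\mathrm{WEP}[q]=\max_e p_e/Q_e$) if and only if $q$ (together with some $z$) is an optimal solution of the linear program $$\text{maximize } z\quad\text{subject to } \frac{1}{p_e}\sum_{i:\,e\in s_i}q_i\ge z\ \ (e\in E),\quad q_i\ge 0\ \ (i\in[m]),\quad \sum_iq_i=1.$$
   Context: An instance consists of a finite set $E$ of elements with positive weights $(p_e)_{e\in E}$ normalized so that $\max_e p_e=1$, and $m$ tests; test $i\in[m]$ is a subset $s_i\subseteq E$. A memoryless schedule is a probability distribution $q$ on $[m]$; it generates a test sequence by drawing each test independently according to $q$. $Q_e=\sum_{i:e\in s_i}q_i$. Detection time $T(e,t)=\mathbb{E}[1+\min\{h\ge0:e\in s_{\sigma_{t+h}}\}]$; $\mathrm{WMP}=\sup_{e,t}p_eT(e,t)$, $\mathrm{WEP}=\max_e p_e\lim_H\frac1H\sum_{t\le H}T(e,t)$, $\mathrm{MWP}=\lim_H\frac1H\sum_{t\le H}\max_ep_eT(e,t)$. *)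

theory Defs
  imports "HOL-Analysis.Analysis"
begin

text \<open>Tests are indexed by 0..<m; test i is the set s i.
  A memoryless schedule is a probability vector q on {0..<m}.\<close>

definition is_instance :: "'a set \<Rightarrow> ('a \<Rightarrow> real) \<Rightarrow> nat \<Rightarrow> (nat \<Rightarrow> 'a set) \<Rightarrow> bool" where
  "is_instance E p m s \<longleftrightarrow> finite E \<and> (\<forall>e\<in>E. 0 < p e) \<and> (\<forall>e\<in>E. p e \<le> 1)
     \<and> (\<exists>e\<in>E. p e = 1) \<and> (\<forall>i<m. s i \<subseteq> E)"

definition memoryless_schedule :: "nat \<Rightarrow> (nat \<Rightarrow> real) \<Rightarrow> bool" where
  "memoryless_schedule m q \<longleftrightarrow> (\<forall>i<m. 0 \<le> q i) \<and> (\<Sum>i<m. q i) = 1"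

definition Qe :: "nat \<Rightarrow> (nat \<Rightarrow> 'a set) \<Rightarrow> (nat \<Rightarrow> real) \<Rightarrow> 'a \<Rightarrow> real" where
  "Qe m s q e = (\<Sum>i\<in>{i. i < m \<and> e \<in> s i}. q i)"

text \<open>The common value WMP = MWP = WEP of a memoryless schedule: max_e p_e / Q_e,
  with p_e / 0 = \<infinity> (element never tested).\<close>
definition memoryless_value ::
  "'a set \<Rightarrow> ('a \<Rightarrow> real) \<Rightarrow> nat \<Rightarrow> (nat \<Rightarrow> 'a set) \<Rightarrow> (nat \<Rightarrow> real) \<Rightarrow> ereal" where
  "memoryless_value E p m s q =
     (SUP e\<in>E. (if Qe m s q e = 0 then \<infinity> else ereal (p e / Qe m s q e)))"

definition opt_M_MAX :: "'a set \<Rightarrow> ('a \<Rightarrow> real) \<Rightarrow> nat \<Rightarrow> (nat \<Rightarrow> 'a set) \<Rightarrow> ereal" where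
  "opt_M_MAX E p m s = (INF q\<in>{q. memoryless_schedule m q}. memoryless_value E p m s q)"

definition lp_feasible ::
  "'a set \<Rightarrow> ('a \<Rightarrow> real) \<Rightarrow> nat \<Rightarrow> (nat \<Rightarrow> 'a set) \<Rightarrow> (nat \<Rightarrow> real) \<Rightarrow> real \<Rightarrow> bool" where
  "lp_feasible E p m s q z \<longleftrightarrow>
     (\<forall>e\<in>E. (1 / p e) * (\<Sum>i\<in>{i. i < m \<and> e \<in> s i}. q i) \<ge> z)
     \<and> (\<forall>i<m. q i \<ge> 0) \<and> (\<Sum>i<m. q i) = 1"

definition lp_optimal ::
  "'a set \<Rightarrow> ('a \<Rightarrow> real) \<Rightarrow> nat \<Rightarrow> (nat \<Rightarrow> 'a set) \<Rightarrow> (nat \<Rightarrow> real) \<Rightarrow> real \<Rightarrow> bool" where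
  "lp_optimal E p m s q z \<longleftrightarrow> lp_feasible E p m s q z \<and>
     (\<forall>q' z'. lp_feasible E p m s q' z' \<longrightarrow> z' \<le> z)"

end

theory Submission
  imports Defs
begin

text \<open>For a memoryless schedule q write c(q) = min_e Q_e / p_e; this is the largest z
  for which (q, z) satisfies the constraints of the linear program, so the program
  maximises c over schedules. Since p_e / Q_e is the inverse of Q_e / p_e (with
  p_e / 0 = \<infinity> matching the extended-real inverse of 0) and inversion is antitone on
  [0, \<infinity>], the memoryless value of q is the inverse of c(q). Inversion reflects the
  order on nonnegative numbers, hence q minimises the value iff it maximises c.\<close>

definition coverage :: "'a set \<Rightarrow> ('a \<Rightarrow> real) \<Rightarrow> nat \<Rightarrow> (nat \<Rightarrow> 'a set) \<Rightarrow> (nat \<Rightarrow> real) \<Rightarrow> real"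
  where "coverage E p m s q = Min ((\<lambda>e. Qe m s q e / p e) ` E)"

lemma SUP_antimono_eq_Min:
  fixes g :: "'a::linorder \<Rightarrow> 'b::complete_lattice"
  assumes "finite A" "A \<noteq> {}" and antimono: "\<And>x y. x \<in> A \<Longrightarrow> y \<in> A \<Longrightarrow> x \<le> y \<Longrightarrow> g y \<le> g x"
  shows "(SUP x\<in>A. g x) = g (Min A)"
proof (rule antisym)
  have "Min A \<in> A" using assms(1,2) by (rule Min_in)
  then show "(SUP x\<in>A. g x) \<le> g (Min A)"
    using assms(1) by (auto intro!: SUP_least antimono)
  show "g (Min A) \<le> (SUP x\<in>A. g x)"
    using \<open>Min A \<in> A\<close> by (rule SUP_upper)
qed

lemma inverse_ereal_le_iff:
  assumes "0 \<le> x" "0 \<le> y"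
  shows "inverse (ereal x) \<le> inverse (ereal y) \<longleftrightarrow> y \<le> x"
  using ereal_inverse_antimono[of "ereal y" "ereal x"] ereal_inverse_antimono_strict[of "ereal x" "ereal y"]
    assms by (auto simp del: inverse_ereal.simps simp: not_le[symmetric])

lemma Qe_nonneg:
  assumes "memoryless_schedule m q"
  shows "0 \<le> Qe m s q e"
  using assms unfolding memoryless_schedule_def Qe_def by (auto intro: sum_nonneg)

context
  fixes E :: "'a set" and p :: "'a \<Rightarrow> real" and m :: nat and s :: "nat \<Rightarrow> 'a set"
  assumes inst: "is_instance E p m s"
begin

lemma instance_finite: "finite E" and instance_nonempty: "E \<noteq> {}"
  and instance_weight_pos: "e \<in> E \<Longrightarrow> 0 < p e"
  using inst unfolding is_instance_def by auto

lemma coverage_le: "e \<in> E \<Longrightarrow> coverage E p m s q \<le> Qe m s q e / p e"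
  unfolding coverage_def using instance_finite by auto

lemma coverage_attained: "\<exists>e\<in>E. coverage E p m s q = Qe m s q e / p e"
proof -
  have "coverage E p m s q \<in> (\<lambda>e. Qe m s q e / p e) ` E"
    unfolding coverage_def using instance_finite instance_nonempty by (intro Min_in) auto
  then show ?thesis by auto
qed

lemma coverage_nonneg: "memoryless_schedule m q \<Longrightarrow> 0 \<le> coverage E p m s q"
  using coverage_attained[of q] Qe_nonneg instance_weight_pos
  by (metis divide_nonneg_pos)

lemma memoryless_value_eq_inverse_coverage:
  assumes "memoryless_schedule m q"
  shows "memoryless_value E p m s q = inverse (ereal (coverage E p m s q))"
proof -
  have "memoryless_value E p m s q = (SUP e\<in>E. inverse (ereal (Qe m s q e / p e)))"
    unfolding memoryless_value_def using instance_weight_pos by (intro SUP_cong) force+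
  also have "\<dots> = (SUP x\<in>(\<lambda>e. Qe m s q e / p e) ` E. inverse (ereal x))"
    by (simp only: image_image)
  also have "\<dots> = inverse (ereal (coverage E p m s q))"
    unfolding coverage_def
  proof (rule SUP_antimono_eq_Min)
    fix x y assume "x \<in> (\<lambda>e. Qe m s q e / p e) ` E" "x \<le> y"
    moreover have "0 \<le> Qe m s q e / p e" if "e \<in> E" for e
      using Qe_nonneg[OF assms] instance_weight_pos[OF that] by (rule divide_nonneg_pos)
    ultimately show "inverse (ereal y) \<le> inverse (ereal x)"
      by (auto intro: ereal_inverse_antimono simp del: inverse_ereal.simps)
  qed (use instance_finite instance_nonempty in auto)
  finally show ?thesis .
qed

lemma memoryless_value_le_iff:
  assumes "memoryless_schedule m q" "memoryless_schedule m q'"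
  shows "memoryless_value E p m s q \<le> memoryless_value E p m s q'
           \<longleftrightarrow> coverage E p m s q' \<le> coverage E p m s q"
  using assms by (simp add: memoryless_value_eq_inverse_coverage coverage_nonneg inverse_ereal_le_iff
      del: inverse_ereal.simps)

lemma lp_feasible_iff:
  "lp_feasible E p m s q z \<longleftrightarrow> memoryless_schedule m q \<and> z \<le> coverage E p m s q"
proof -
  have "(\<forall>e\<in>E. z \<le> Qe m s q e / p e) \<longleftrightarrow> z \<le> coverage E p m s q"
    using coverage_le coverage_attained[of q] by (metis order_trans)
  then show ?thesis
    unfolding lp_feasible_def memoryless_schedule_def Qe_def by auto
qed

lemma lp_optimal_iff:
  "(\<exists>z. lp_optimal E p m s q z) \<longleftrightarrow> memoryless_schedule m q
     \<and> (\<forall>q'. memoryless_schedule m q' \<longrightarrow> coverage E p m s q' \<le> coverage E p m s q)"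
  unfolding lp_optimal_def lp_feasible_iff by (meson order.refl order.trans)

end

lemma INF_eq_iff_minimum:
  fixes f :: "'a \<Rightarrow> 'b::complete_lattice"
  assumes "x \<in> A"
  shows "f x = (INF y\<in>A. f y) \<longleftrightarrow> (\<forall>y\<in>A. f x \<le> f y)"
  using assms by (metis INF_greatest INF_lower antisym)

theorem theorem2:
  fixes E :: "'a set" and p :: "'a \<Rightarrow> real" and m :: nat and s :: "nat \<Rightarrow> 'a set"
    and q :: "nat \<Rightarrow> real"
  assumes "is_instance E p m s"
  shows "(memoryless_schedule m q \<and> memoryless_value E p m s q = opt_M_MAX E p m s)
         \<longleftrightarrow> (\<exists>z. lp_optimal E p m s q z)"
proof (cases "memoryless_schedule m q")
  case True
  then have "memoryless_value E p m s q = opt_M_MAX E p m s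
      \<longleftrightarrow> (\<forall>q'. memoryless_schedule m q' \<longrightarrow> coverage E p m s q' \<le> coverage E p m s q)"
    unfolding opt_M_MAX_def
    by (simp add: INF_eq_iff_minimum memoryless_value_le_iff[OF assms])
  with True show ?thesis
    by (simp add: lp_optimal_iff[OF assms])
next
  case False
  then show ?thesis by (simp add: lp_optimal_iff[OF assms])
qed

end
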